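(* In the setting of the context, for every $g_0\in F_{xz}$ and $g_1\in F_{yz}$ we have $|g_1^{-1}g_0|_{S_1}\ge f(|g_0|_{S_1})$.
   Context: $H$ is a finitely presented group with finite generating set $T$, containing a free subgroup $F$ of rank $p$ with free basis $R=\{d_1,\dots,d_p\}\subset T$ (standing assumption: $\mathrm{Dist}_F^H$ admits an exponentially bounded sequence of palindromic certificates in $F$). $F_x,F_y,F_z$ are free of rank $p$ with bases $R_x=\{x_i\},R_y=\{y_i\},R_z=\{z_i\}$. $G_1=[H\ast_{\langle d_i=x_iy_i^{-1}\rangle}(F_x\times F_y\times F_z)]\times\langle s_1\rangle$; $a_i=x_iz_i$, $b_i=y_iz_i$, $R_{xz}=\{a_i\}$, $R_{yz}=\{b_i\}$, $F_{xz}=\langle R_{xz}\rangle$, $F_{yz}=\langle R_{yz}\rangle$; $S_1=T\cup R_x\cup R_y\cup R_z\cup R_{xz}\cup R_{yz}\cup\{s_1\}$. $\mathrm{Dist}_F^H(n)=\max\{|g|_R:g\in F,|g|_T\le n\}$ (linearly interpolated). $f=\Delta^{-1}$, where $\Delta:[0,\infty)\to[0,\infty)$ is a non-decreasing bijection Lipschitz equivalent to $\mathrm{Dist}_F^H$ with $\Delta(r)\ge r$ for $r\ge1$ and $f(|g|_R)\le|g|_T$ for every $g\in F$ (Lipschitz equivalence: $\exists M\ge1$ with $g(r)\le Mf(Mr)$, $f(r)\le Mg(Mr)$ for $r\ge1$). *)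

theory Defs
  imports Complex_Main "HOL-Algebra.Generated_Groups"
begin

text \<open>A word over an alphabet 'a is a list of signed letters: (a, True) is a, (a, False) is a^-1.\<close>

fun weval :: "('g, 'm) monoid_scheme \<Rightarrow> ('a \<Rightarrow> 'g) \<Rightarrow> ('a \<times> bool) list \<Rightarrow> 'g" where
  "weval G h [] = \<one>\<^bsub>G\<^esub>"
| "weval G h ((a, b) # w) = (if b then h a else inv\<^bsub>G\<^esub> (h a)) \<otimes>\<^bsub>G\<^esub> weval G h w"

definition winv :: "('a \<times> bool) list \<Rightarrow> ('a \<times> bool) list" where
  "winv w = rev (map (\<lambda>(a, b). (a, \<not> b)) w)"

definition reduced_word :: "('a \<times> bool) list \<Rightarrow> bool" where
  "reduced_word w \<longleftrightarrow>
     (\<forall>i. Suc i < length w \<longrightarrow> \<not> (fst (w ! i) = fst (w ! Suc i) \<and> snd (w ! i) \<noteq> snd (w ! Suc i)))"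

definition wlen :: "('g, 'm) monoid_scheme \<Rightarrow> 'g set \<Rightarrow> 'g \<Rightarrow> nat" where
  "wlen G S g = (LEAST n. \<exists>w. set (map fst w) \<subseteq> S \<and> length w = n \<and> weval G id w = g)"

definition free_basis :: "('g, 'm) monoid_scheme \<Rightarrow> 'g set \<Rightarrow> bool" where
  "free_basis G D \<longleftrightarrow> D \<subseteq> carrier G \<and>
     (\<forall>w. set (map fst w) \<subseteq> D \<and> reduced_word w \<and> w \<noteq> [] \<longrightarrow> weval G id w \<noteq> \<one>\<^bsub>G\<^esub>)"

inductive pres_eq :: "('a \<times> bool) list set \<Rightarrow> ('a \<times> bool) list \<Rightarrow> ('a \<times> bool) list \<Rightarrow> bool"
  for Rel where
  refl: "pres_eq Rel w w"
| sym: "pres_eq Rel u v \<Longrightarrow> pres_eq Rel v u"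
| trans: "pres_eq Rel u v \<Longrightarrow> pres_eq Rel v w \<Longrightarrow> pres_eq Rel u w"
| cancel: "pres_eq Rel (u @ v) (u @ [(a, b), (a, \<not> b)] @ v)"
| rel: "r \<in> Rel \<Longrightarrow> pres_eq Rel (u @ v) (u @ r @ v)"

definition fin_presented :: "('g, 'm) monoid_scheme \<Rightarrow> 'g set \<Rightarrow> bool" where
  "fin_presented H T \<longleftrightarrow> (\<exists>Rel. finite Rel \<and> (\<forall>r\<in>Rel. set (map fst r) \<subseteq> T) \<and>
     (\<forall>u v. set (map fst u) \<subseteq> T \<longrightarrow> set (map fst v) \<subseteq> T \<longrightarrow>
        (weval H id u = weval H id v \<longleftrightarrow> pres_eq Rel u v)))"

definition glen :: "('a \<times> bool) list set \<Rightarrow> 'a set \<Rightarrow> ('a \<times> bool) list \<Rightarrow> nat" where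
  "glen Rel S w = (LEAST n. \<exists>w'. set (map fst w') \<subseteq> S \<and> length w' = n \<and> pres_eq Rel w w')"

datatype 'h gen1 = HG 'h | X nat | Y nat | Z nat | A nat | B nat | S1

definition comm_word :: "'a \<Rightarrow> 'a \<Rightarrow> ('a \<times> bool) list" where
  "comm_word a b = [(a, True), (b, True), (a, False), (b, False)]"

definition S1set :: "'h set \<Rightarrow> nat \<Rightarrow> 'h gen1 set" where
  "S1set T p = HG ` T \<union> X ` {..<p} \<union> Y ` {..<p} \<union> Z ` {..<p} \<union> A ` {..<p} \<union> B ` {..<p} \<union> {S1}"

text \<open>Relators of
  G_1 = [H *_{d_i = x_i y_i^-1} (F_x x F_y x F_z)] x <s_1>, with a_i = x_i z_i, b_i = y_i z_i.\<close>
definition G1_rels :: "('h, 'm) monoid_scheme \<Rightarrow> 'h set \<Rightarrow> (nat \<Rightarrow> 'h) \<Rightarrow> nat \<Rightarrow> ('h gen1 \<times> bool) list set" where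
  "G1_rels H T d p =
     {map (\<lambda>(t, b). (HG t, b)) w | w. set (map fst w) \<subseteq> T \<and> weval H id w = \<one>\<^bsub>H\<^esub>}
   \<union> {comm_word (X i) (Y j) | i j. i < p \<and> j < p}
   \<union> {comm_word (X i) (Z j) | i j. i < p \<and> j < p}
   \<union> {comm_word (Y i) (Z j) | i j. i < p \<and> j < p}
   \<union> {[(HG (d i), True), (Y i, True), (X i, False)] | i. i < p}
   \<union> {[(A i, True), (Z i, False), (X i, False)] | i. i < p}
   \<union> {[(B i, True), (Z i, False), (Y i, False)] | i. i < p}
   \<union> {comm_word S1 s | s. s \<in> S1set T p}"

definition Dist_nat :: "('g, 'm) monoid_scheme \<Rightarrow> 'g set \<Rightarrow> 'g set \<Rightarrow> nat \<Rightarrow> real" where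
  "Dist_nat H T R n = Max {real (wlen H R g) | g. g \<in> generate H R \<and> wlen H T g \<le> n}"

definition Dist :: "('g, 'm) monoid_scheme \<Rightarrow> 'g set \<Rightarrow> 'g set \<Rightarrow> real \<Rightarrow> real" where
  "Dist H T R r = (let k = nat \<lfloor>r\<rfloor> in
     Dist_nat H T R k + (r - real k) * (Dist_nat H T R (Suc k) - Dist_nat H T R k))"

definition lip_equiv :: "(real \<Rightarrow> real) \<Rightarrow> (real \<Rightarrow> real) \<Rightarrow> bool" where
  "lip_equiv g f \<longleftrightarrow> (\<exists>M\<ge>1. \<forall>r\<ge>1. g r \<le> M * f (M * r) \<and> f r \<le> M * g (M * r))"

end

(* The retraction of G_1 onto H that kills F_y, F_z and s_1 and sends x_i and a_i to d_i is
   trivial on F_yz and maps F_xz isometrically onto F: a reduced word in the a_i goes to a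
   reduced word in the free basis d_i, and reduced words over a free basis are geodesic.
   Hence if a word w over S_1 represents g_1^-1 g_0, its image g = rho(g_0) satisfies
   |g|_T <= |w| (every generator goes to a letter of T or to 1), while
   |g_0|_{S_1} <= |g|_R. Monotonicity of f and f(|g|_R) <= |g|_T conclude. *)

theory Submission
  imports Defs
begin

definition cancels :: "('a \<times> bool) \<Rightarrow> ('a \<times> bool) \<Rightarrow> bool" where
  "cancels x y \<longleftrightarrow> fst x = fst y \<and> snd x \<noteq> snd y"

lemma reduced_word_Nil [simp]: "reduced_word []"
  by (simp add: reduced_word_def)

lemma reduced_word_Cons:
  "reduced_word (x # w) \<longleftrightarrow> reduced_word w \<and> (w \<noteq> [] \<longrightarrow> \<not> cancels x (hd w))"
proof (cases w)
  case (Cons y w')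
  have "(\<forall>i. Suc i < length (x # w) \<longrightarrow> P i) \<longleftrightarrow> P 0 \<and> (\<forall>i. Suc i < length w \<longrightarrow> P (Suc i))" for P
    using Cons by (metis All_less_Suc2 Suc_less_eq length_Cons)
  then show ?thesis unfolding reduced_word_def cancels_def using Cons by auto
qed (simp add: reduced_word_def)

lemma reduced_word_append:
  "reduced_word (u @ v) \<longleftrightarrow>
     reduced_word u \<and> reduced_word v \<and> (u \<noteq> [] \<longrightarrow> v \<noteq> [] \<longrightarrow> \<not> cancels (last u) (hd v))"
  by (induction u) (auto simp: reduced_word_Cons)

lemma reduced_word_rev: "reduced_word (rev w) \<longleftrightarrow> reduced_word w"
  by (induction w) (auto simp: reduced_word_append reduced_word_Cons hd_rev last_rev cancels_def)

lemma reduced_word_map: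
  assumes "inj_on h (fst ` set w)"
  shows "reduced_word (map (\<lambda>(a, b). (h a, b)) w) \<longleftrightarrow> reduced_word w"
  using assms
proof (induction w)
  case (Cons x w)
  have "h (fst x) = h (fst (hd w)) \<longleftrightarrow> fst x = fst (hd w)" if "w \<noteq> []"
    using Cons.prems that by (auto dest: inj_onD)
  with Cons show ?case
    by (auto simp: reduced_word_Cons cancels_def hd_map split: prod.splits)
qed simp

lemma reduced_word_flip: "reduced_word (map (\<lambda>(a, b). (a, \<not> b)) w) \<longleftrightarrow> reduced_word w"
  by (induction w) (auto simp: reduced_word_Cons cancels_def hd_map split: prod.splits)

lemma reduced_word_winv: "reduced_word (winv w) \<longleftrightarrow> reduced_word w"
  by (simp add: winv_def reduced_word_rev reduced_word_flip)

lemma letters_winv [simp]: "fst ` set (winv w) = fst ` set w"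
  by (auto simp: winv_def image_image split_def)

lemma not_reduced_word_split:
  assumes "\<not> reduced_word w"
  obtains u a b v where "w = u @ [(a, b), (a, \<not> b)] @ v"
  using assms
proof (induction w arbitrary: thesis)
  case (Cons x w)
  show ?case
  proof (cases "reduced_word w")
    case True
    with Cons.prems(2) obtain w' where "w = hd w # w'" "cancels x (hd w)"
      by (metis list.exhaust_sel reduced_word_Cons)
    then have "x # w = [] @ [(fst x, snd x), (fst x, \<not> snd x)] @ w'"
      by (auto simp: cancels_def prod_eq_iff)
    then show ?thesis by (rule Cons.prems(1))
  next
    case False
    then obtain u a b v where "w = u @ [(a, b), (a, \<not> b)] @ v" using Cons.IH by blast
    then have "x # w = (x # u) @ [(a, b), (a, \<not> b)] @ v" by simp
    then show ?thesis by (rule Cons.prems(1))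
  qed
qed simp

lemma free_reduction_exists:
  obtains w' where "reduced_word w'" "set w' \<subseteq> set w" "pres_eq Rel w w'"
proof (induction "length w" arbitrary: w thesis rule: less_induct)
  case less
  show ?case
  proof (cases "reduced_word w")
    case True
    then show ?thesis using less.prems pres_eq.refl by blast
  next
    case False
    then obtain u a b v where w: "w = u @ [(a, b), (a, \<not> b)] @ v"
      by (rule not_reduced_word_split)
    then have "length (u @ v) < length w" by simp
    then obtain w' where "reduced_word w'" "set w' \<subseteq> set (u @ v)" "pres_eq Rel (u @ v) w'"
      by (rule less.hyps)
    moreover have "pres_eq Rel w (u @ v)"
      unfolding w by (rule pres_eq.sym) (rule pres_eq.cancel)
    ultimately show ?thesis
      using less.prems w by (auto intro: pres_eq.trans)
  qed
qed

lemma wlen_le: "set (map fst w) \<subseteq> S \<Longrightarrow> wlen G S (weval G id w) \<le> length w"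
  unfolding wlen_def by (rule Least_le) blast

lemma wlen_witness:
  assumes "set (map fst w) \<subseteq> S"
  obtains v where "set (map fst v) \<subseteq> S" "length v = wlen G S (weval G id w)"
    "weval G id v = weval G id w"
proof -
  have "\<exists>v. set (map fst v) \<subseteq> S \<and> length v = wlen G S (weval G id w) \<and>
      weval G id v = weval G id w"
    unfolding wlen_def by (rule LeastI_ex) (use assms in blast)
  with that show ?thesis by blast
qed

lemma glen_le: "set (map fst w') \<subseteq> S \<Longrightarrow> pres_eq Rel w w' \<Longrightarrow> glen Rel S w \<le> length w'"
  unfolding glen_def by (rule Least_le) blast

lemma glen_witness:
  assumes "set (map fst w) \<subseteq> S"
  obtains w' where "set (map fst w') \<subseteq> S" "length w' = glen Rel S w" "pres_eq Rel w w'"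
proof -
  have "\<exists>w'. set (map fst w') \<subseteq> S \<and> length w' = glen Rel S w \<and> pres_eq Rel w w'"
    unfolding glen_def by (rule LeastI_ex) (use assms pres_eq.refl in blast)
  with that show ?thesis by blast
qed

lemma free_basis_trivial_word:
  assumes "free_basis G D" and "reduced_word w" and "set (map fst w) \<subseteq> D"
    and "weval G id w = \<one>\<^bsub>G\<^esub>"
  shows "w = []"
  using assms unfolding free_basis_def by blast

context group
begin

lemma weval_closed: "h ` set (map fst w) \<subseteq> carrier G \<Longrightarrow> weval G h w \<in> carrier G"
  by (induction w) auto

lemma weval_append:
  assumes "h ` set (map fst u) \<subseteq> carrier G" and "h ` set (map fst v) \<subseteq> carrier G"
  shows "weval G h (u @ v) = weval G h u \<otimes> weval G h v"
  using assms by (induction u) (auto simp: m_assoc weval_closed)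

lemma weval_winv:
  assumes "h ` set (map fst w) \<subseteq> carrier G"
  shows "weval G h (winv w) = inv (weval G h w)"
  using assms
proof (induction w)
  case (Cons x w)
  obtain a b where x: "x = (a, b)" by fastforce
  have "winv (x # w) = winv w @ [(a, \<not> b)]"
    by (simp add: winv_def x)
  then show ?case
    using Cons x by (auto simp: weval_append weval_closed inv_mult_group)
qed (simp add: winv_def)

lemma weval_cancel:
  assumes "h ` set (map fst u) \<subseteq> carrier G" and "h ` set (map fst v) \<subseteq> carrier G"
    and "h a \<in> carrier G"
  shows "weval G h (u @ [(a, b), (a, \<not> b)] @ v) = weval G h (u @ v)"
  using assms by (cases b) (simp_all add: weval_append weval_closed m_assoc[symmetric])

lemma weval_eq_one: "(\<And>a. a \<in> set (map fst w) \<Longrightarrow> h a = \<one>) \<Longrightarrow> weval G h w = \<one>"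
  by (induction w) auto

lemma weval_map_letters: "weval G id (map (\<lambda>(a, b). (h a, b)) w) = weval G h w"
  by (induction w) auto

lemma weval_in_generate:
  "set (map fst w) \<subseteq> D \<Longrightarrow> D \<subseteq> carrier G \<Longrightarrow> weval G id w \<in> generate G D"
  by (induction w) (auto intro: generate.one generate.eng[OF generate.incl] generate.eng[OF generate.inv])

lemma pres_eq_weval:
  assumes "pres_eq Rel u v"
    and "\<And>a. h a \<in> carrier G" and "\<And>r. r \<in> Rel \<Longrightarrow> weval G h r = \<one>"
  shows "weval G h u = weval G h v"
  using assms(1)
proof (induction rule: pres_eq.induct)
  case (cancel u v a b)
  then show ?case using assms(2) weval_cancel[of h u v a b] by (simp add: image_subset_iff)
next
  case (rel r u v)
  then show ?case using assms(2,3) by (simp add: weval_append weval_closed image_subset_iff)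
qed auto

lemma reduced_word_unique:
  assumes D: "free_basis G D"
  shows "\<lbrakk>reduced_word u; reduced_word v; set (map fst u) \<subseteq> D; set (map fst v) \<subseteq> D;
          weval G id u = weval G id v\<rbrakk> \<Longrightarrow> u = v"
proof (induction u arbitrary: v)
  case Nil
  then show ?case using free_basis_trivial_word[OF D, of v] by (simp add: id_def)
next
  case (Cons x u)
  have DG: "D \<subseteq> carrier G" using D by (simp add: free_basis_def)
  show ?case
  proof (cases v)
    case Nil
    then show ?thesis using Cons.prems free_basis_trivial_word[OF D, of "x # u"] by (simp add: id_def)
  next
    case (Cons y v')
    show ?thesis
    proof (cases "x = y")
      case True
      obtain a b where x: "x = (a, b)" by fastforce
      have "a \<in> carrier G" using Cons.prems DG x by auto
      moreover have "weval G id u \<in> carrier G" "weval G id v' \<in> carrier G"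
        using Cons Cons.prems DG by (force intro!: weval_closed)+
      ultimately have "weval G id u = weval G id v'"
        using Cons.prems(5) Cons True x by (cases b) (auto simp: id_def)
      with Cons Cons.prems True show ?thesis
        using Cons.IH[of v'] by (simp add: reduced_word_Cons id_def)
    next
      case False
      \<comment> \<open>then u^-1 x^-1 v is a nonempty reduced word representing 1\<close>
      let ?w = "winv (x # u) @ v"
      have "last (winv (x # u)) = (fst x, \<not> snd x)"
        by (simp add: winv_def last_rev split: prod.split)
      with False Cons Cons.prems have "reduced_word ?w"
        by (auto simp: reduced_word_append reduced_word_winv cancels_def prod_eq_iff)
      moreover have "weval G id ?w = \<one>"
      proof -
        have "fst ` set (x # u) \<subseteq> carrier G" "fst ` set v \<subseteq> carrier G"
          using Cons.prems DG by auto
        then show ?thesis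
          using Cons.prems(5) by (simp add: weval_append weval_winv weval_closed id_def)
      qed
      moreover have "set (map fst ?w) \<subseteq> D" using Cons.prems by auto
      ultimately have "?w = []" using free_basis_trivial_word[OF D] by blast
      then show ?thesis by (simp add: winv_def)
    qed
  qed
qed

lemma geodesic_word_reduced:
  assumes "S \<subseteq> carrier G" and "set (map fst w) \<subseteq> S" and "length w \<le> wlen G S (weval G id w)"
  shows "reduced_word w"
proof (rule ccontr)
  assume "\<not> reduced_word w"
  then obtain u a b v where w: "w = u @ [(a, b), (a, \<not> b)] @ v"
    by (rule not_reduced_word_split)
  moreover have "fst ` set u \<subseteq> carrier G" "fst ` set v \<subseteq> carrier G" "a \<in> carrier G"
    using assms(1,2) w by auto
  ultimately have "weval G id w = weval G id (u @ v)"
    using weval_cancel[of id u v a b] by simp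
  moreover have "set (map fst (u @ v)) \<subseteq> S" using assms(2) w by auto
  ultimately have "wlen G S (weval G id w) \<le> length (u @ v)" by (metis wlen_le)
  then show False using assms(3) w by simp
qed

lemma wlen_reduced_word:
  assumes D: "free_basis G D" and "reduced_word w" and "set (map fst w) \<subseteq> D"
  shows "wlen G D (weval G id w) = length w"
proof -
  have DG: "D \<subseteq> carrier G" using D by (simp add: free_basis_def)
  obtain v where v: "set (map fst v) \<subseteq> D" "length v = wlen G D (weval G id w)"
    "weval G id v = weval G id w"
    using assms(3) by (rule wlen_witness)
  then have "reduced_word v" using DG by (intro geodesic_word_reduced[of D]) auto
  then have "v = w" using reduced_word_unique[OF D] v assms(2,3) by blast
  then show ?thesis using v(2) by simp
qed

end

lemma mono_on_the_inv_into:
  fixes \<Delta> :: "'a::linorder \<Rightarrow> 'b::linorder"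
  assumes mono: "mono_on S \<Delta>" and bij: "bij_betw \<Delta> S S'"
  shows "mono_on S' (the_inv_into S \<Delta>)"
proof (rule mono_onI)
  fix a b assume ab: "a \<in> S'" "b \<in> S'" "a \<le> b"
  let ?f = "the_inv_into S \<Delta>"
  have inv: "?f a \<in> S" "?f b \<in> S" "\<Delta> (?f a) = a" "\<Delta> (?f b) = b"
    using ab bij_betwE[OF bij_betw_the_inv_into[OF bij]] f_the_inv_into_f_bij_betw[OF bij]
    by auto
  show "?f a \<le> ?f b"
  proof (cases "a = b")
    case False
    with ab inv have "\<Delta> (?f a) < \<Delta> (?f b)" by simp
    then show ?thesis using mono_on_invE[OF mono] inv by blast
  qed simp
qed

(* Out-of-range arguments go to 1, so that every generator lands in the carrier. *)
fun retract_gen :: "('h, 'm) monoid_scheme \<Rightarrow> (nat \<Rightarrow> 'h) \<Rightarrow> nat \<Rightarrow> 'h gen1 \<Rightarrow> 'h" where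
  "retract_gen H d p (HG t) = (if t \<in> carrier H then t else \<one>\<^bsub>H\<^esub>)"
| "retract_gen H d p (X i) = (if i < p then d i else \<one>\<^bsub>H\<^esub>)"
| "retract_gen H d p (A i) = (if i < p then d i else \<one>\<^bsub>H\<^esub>)"
| "retract_gen H d p (Y i) = \<one>\<^bsub>H\<^esub>"
| "retract_gen H d p (Z i) = \<one>\<^bsub>H\<^esub>"
| "retract_gen H d p (B i) = \<one>\<^bsub>H\<^esub>"
| "retract_gen H d p S1 = \<one>\<^bsub>H\<^esub>"

context group
begin

lemma retract_gen_closed: "d ` {..<p} \<subseteq> carrier G \<Longrightarrow> retract_gen G d p a \<in> carrier G"
  by (cases a) auto

lemma weval_retract_gen_relator:
  assumes "T \<subseteq> carrier G" and "d ` {..<p} \<subseteq> carrier G" and "r \<in> G1_rels G T d p"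
  shows "weval G (retract_gen G d p) r = \<one>"
  using assms(3) unfolding G1_rels_def
proof (elim UnE)
  assume "r \<in> {map (\<lambda>(t, b). (HG t, b)) w | w. set (map fst w) \<subseteq> T \<and> weval G id w = \<one>}"
  then obtain w where w: "r = map (\<lambda>(t, b). (HG t, b)) w" "set (map fst w) \<subseteq> T"
    "weval G id w = \<one>"
    by blast
  have "weval G (retract_gen G d p) r = weval G id w"
    using w(1,2) assms(1) by (induction w arbitrary: r) auto
  then show ?thesis using w(3) by simp
qed (use assms(2) retract_gen_closed in \<open>auto simp: comm_word_def\<close>)

lemma weval_retract_gen_pres_eq:
  assumes "T \<subseteq> carrier G" and "d ` {..<p} \<subseteq> carrier G" and "pres_eq (G1_rels G T d p) u v"
  shows "weval G (retract_gen G d p) u = weval G (retract_gen G d p) v"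
  using pres_eq_weval[OF assms(3) retract_gen_closed[OF assms(2)]
      weval_retract_gen_relator[OF assms(1,2)]] .

lemma weval_retract_gen_kills_B_word:
  assumes "d ` {..<p} \<subseteq> carrier G" and "set (map fst w1) \<subseteq> B ` {..<p}"
  shows "weval G (retract_gen G d p) (winv w1 @ w0) = weval G (retract_gen G d p) w0"
proof -
  have closed: "retract_gen G d p ` X \<subseteq> carrier G" for X
    using retract_gen_closed[OF assms(1)] by auto
  have "retract_gen G d p b = \<one>" if "b \<in> set (map fst (winv w1))" for b
  proof -
    from that assms(2) obtain i where "b = B i" by auto
    then show ?thesis by simp
  qed
  then have "weval G (retract_gen G d p) (winv w1) = \<one>" by (rule weval_eq_one)
  then show ?thesis
    using weval_append[OF closed closed, of "winv w1" w0] weval_closed[OF closed, of w0] by simp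
qed

lemma wlen_retract_le:
  assumes "T \<subseteq> carrier G" and "d ` {..<p} \<subseteq> T" and "set (map fst w) \<subseteq> S1set T p"
  shows "wlen G T (weval G (retract_gen G d p) w) \<le> length w"
proof -
  have "\<exists>u. set (map fst u) \<subseteq> T \<and> length u \<le> length w \<and>
      weval G id u = weval G (retract_gen G d p) w"
    using assms(3)
  proof (induction w)
    case Nil
    then show ?case by (intro exI[of _ "[]"]) simp
  next
    case (Cons x w)
    then obtain u where u: "set (map fst u) \<subseteq> T" "length u \<le> length w"
      "weval G id u = weval G (retract_gen G d p) w"
      by (auto simp: id_def)
    obtain a b where x: "x = (a, b)" by fastforce
    have "retract_gen G d p a \<in> T \<or> retract_gen G d p a = \<one>"
      using Cons.prems x assms(1,2) by (cases a) (auto simp: S1set_def)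
    then show ?case
    proof
      assume "retract_gen G d p a \<in> T"
      then show ?case
        using u x by (intro exI[of _ "(retract_gen G d p a, b) # u"]) (auto simp: id_def)
    next
      assume "retract_gen G d p a = \<one>"
      moreover have "weval G (retract_gen G d p) w \<in> carrier G"
        using assms(1,2) by (intro weval_closed) (auto intro: retract_gen_closed)
      ultimately show ?case
        using u x by (intro exI[of _ u]) (auto simp: id_def)
    qed
  qed
  then show ?thesis by (metis wlen_le le_trans)
qed

lemma retract_reduced_A_word:
  assumes "inj_on d {..<p}" and D: "free_basis G (d ` {..<p})"
    and "reduced_word w" and "set (map fst w) \<subseteq> A ` {..<p}"
  shows "weval G (retract_gen G d p) w \<in> generate G (d ` {..<p})"
    and "wlen G (d ` {..<p}) (weval G (retract_gen G d p) w) = length w"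
proof -
  let ?w = "map (\<lambda>(a, b). (retract_gen G d p a, b)) w"
  have "inj_on (retract_gen G d p) (A ` {..<p})"
    using assms(1) by (auto simp: inj_on_def)
  then have "reduced_word ?w"
    using assms(3,4) by (simp add: reduced_word_map inj_on_subset)
  moreover have letters: "set (map fst ?w) \<subseteq> d ` {..<p}"
    using assms(4) by force
  moreover have "d ` {..<p} \<subseteq> carrier G" using D by (simp add: free_basis_def)
  ultimately have "weval G id ?w \<in> generate G (d ` {..<p})"
    and "wlen G (d ` {..<p}) (weval G id ?w) = length ?w"
    using weval_in_generate wlen_reduced_word[OF D] by blast+
  then show "weval G (retract_gen G d p) w \<in> generate G (d ` {..<p})"
    and "wlen G (d ` {..<p}) (weval G (retract_gen G d p) w) = length w"
    by (simp_all only: weval_map_letters length_map)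
qed

end

theorem lemma3p7:
  fixes H :: "('h, 'm) monoid_scheme" and T :: "'h set" and d :: "nat \<Rightarrow> 'h" and p :: nat
    and \<Delta> f :: "real \<Rightarrow> real"
    and w0 w1 :: "('h gen1 \<times> bool) list"
  assumes "group H" and "finite T" and "T \<subseteq> carrier H" and "generate H T = carrier H"
    and "fin_presented H T"
    and "d ` {..<p} \<subseteq> T" and "inj_on d {..<p}" and "free_basis H (d ` {..<p})"
    and "mono_on {0..} \<Delta>" and "bij_betw \<Delta> {0..} {0..}" and "\<forall>r\<ge>1. r \<le> \<Delta> r"
    and "lip_equiv \<Delta> (Dist H T (d ` {..<p}))"
    and "f = the_inv_into {0..} \<Delta>"
    and "\<forall>g \<in> generate H (d ` {..<p}). f (real (wlen H (d ` {..<p}) g)) \<le> real (wlen H T g)"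
    and "set (map fst w0) \<subseteq> A ` {..<p}"
    and "set (map fst w1) \<subseteq> B ` {..<p}"
  shows "f (real (glen (G1_rels H T d p) (S1set T p) w0))
           \<le> real (glen (G1_rels H T d p) (S1set T p) (winv w1 @ w0))"
proof -
  interpret H: group H by fact
  let ?R = "G1_rels H T d p" and ?S = "S1set T p" and ?D = "d ` {..<p}"
    and ?\<rho> = "retract_gen H d p"
  have DH: "?D \<subseteq> carrier H" using assms(3,6) by auto
  have "set (map fst (winv w1 @ w0)) \<subseteq> ?S"
    using assms(15,16) by (auto simp: S1set_def)
  then obtain w where w: "set (map fst w) \<subseteq> ?S" "length w = glen ?R ?S (winv w1 @ w0)"
    "pres_eq ?R (winv w1 @ w0) w"
    by (rule glen_witness)
  obtain w0' where w0': "reduced_word w0'" "set w0' \<subseteq> set w0" "pres_eq ?R w0 w0'"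
    by (rule free_reduction_exists)
  have A_letters: "set (map fst w0') \<subseteq> A ` {..<p}" using w0'(2) assms(15) by auto
  define g where "g = weval H ?\<rho> w0'"
  have "weval H ?\<rho> w = g"
    using H.weval_retract_gen_pres_eq[OF assms(3) DH w(3)]
      H.weval_retract_gen_kills_B_word[OF DH assms(16)]
      H.weval_retract_gen_pres_eq[OF assms(3) DH w0'(3)]
    by (simp add: g_def)
  have "glen ?R ?S w0 \<le> length w0'"
    using A_letters by (intro glen_le[OF _ w0'(3)]) (auto simp: S1set_def)
  moreover have "mono_on {0..} f"
    using mono_on_the_inv_into[OF assms(9,10)] assms(13) by simp
  ultimately have "f (real (glen ?R ?S w0)) \<le> f (real (length w0'))"
    by (simp add: mono_onD)
  also have "\<dots> \<le> real (wlen H T g)"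
    using assms(14) H.retract_reduced_A_word[OF assms(7,8) w0'(1) A_letters]
    unfolding g_def by metis
  also have "\<dots> \<le> real (glen ?R ?S (winv w1 @ w0))"
    using H.wlen_retract_le[OF assms(3,6) w(1)] \<open>weval H ?\<rho> w = g\<close> w(2) by simp
  finally show ?thesis .
qed

end
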